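(* Let $\mathcal C$ be a category, $A$ a zigzag of length $n$ in $\mathcal C$, and $i\in[n+1]$ (i.e. $0\le i\le n$). Let $A'$ be the zigzag of length $n+1$ obtained from $A$ by inserting the identity cospan $A(r_i)\xrightarrow{\mathrm{id}}A(r_i)\xleftarrow{\mathrm{id}}A(r_i)$ at position $i$, i.e. $A'(r_j)=A(r_j)$ and $A'(s_j)=A(s_j)$ for $j<i$, $A'(r_i)=A'(s_i)=A'(r_{i+1})=A(r_i)$ with identity legs, and $A'(r_{j+1})=A(r_j)$, $A'(s_{j+1})=A(s_j)$ for $j\ge i$ (with the cospan legs of $A$). Then the zigzag map $f:A\to A'$ whose singular map is the face map $d_i:[n]\to[n+1]$ and all of whose regular and singular slices are identities is $\pi$-cocartesian.
   Context: Notation: for $n\ge 0$, $[n]$ denotes $\{0,\dots,n-1\}$; $\Delta_+$ is the category of these finite total orders and order-preserving maps. The $i$-th face map $d_i:[n]\to[n+1]$ is the unique injective order-preserving map omitting $i$ from its image. For monotone $\varphi:[n]\to[m]$ define $\hat\varphi:[m+1]\to[n+1]$ by $\hat\varphi(i)=\min(\{j\in[n]:\varphi(j)\ge i\}\cup\{n\})$. Zigzags: in a category $\mathcal C$, a zigzag $X$ of length $n$ is a diagram $X(r_0)\xrightarrow{x_0} X(s_0)\xleftarrow{x'_0} X(r_1)\to\cdots\xrightarrow{x_{n-1}} X(s_{n-1})\xleftarrow{x'_{n-1}} X(r_n)$. A zigzag map $f:X\to Y$ (lengths $n$, $m$) consists of a monotone $f_s:[n]\to[m]$, regular slices $f(r_i):X(r_{\hat{f_s}(i)})\to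 Y(r_i)$ for $0\le i\le m$ and singular slices $f(s_j):X(s_j)\to Y(s_{f_s(j)})$ for $0\le j<n$, such that for each $0\le i<m$: if $f_s^{-1}(i)\neq\emptyset$ with least element $p$, greatest $q$, then $f(s_p)\circ x_p=y_i\circ f(r_i)$, $f(s_q)\circ x'_q=y'_i\circ f(r_{i+1})$, $f(s_j)\circ x'_j=f(s_{j+1})\circ x_{j+1}$ for $p\le j<q$; if $f_s^{-1}(i)=\emptyset$ then $y_i\circ f(r_i)=y'_i\circ f(r_{i+1})$. Composition: $(g\circ f)_s=g_s\circ f_s$, $(g\circ f)(s_j)=g(s_{f_s(j)})\circ f(s_j)$, $(g\circ f)(r_i)=g(r_i)\circ f(r_{\hat{g_s}(i)})$. This gives the category $Z(\mathcal C)$. The functor $\pi:Z(\mathcal C)\to\Delta_+$ sends a zigzag of length $n$ to $[n]$ and $f$ to $f_s$. A map $f:x\to y$ is $\pi$-cocartesian if for every map $h:x\to y'$ and every $u:\pi(y)\to\pi(y')$ with $u\circ\pi(f)=\pi(h)$ there is a unique $v:y\to y'$ with $v\circ f=h$ and $\pi(v)=u$. *)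

theory Defs
  imports Main
begin

record ('o, 'm) category =
  Obj :: "'o set"
  Arr :: "'m set"
  dom :: "'m \<Rightarrow> 'o"
  cod :: "'m \<Rightarrow> 'o"
  comp :: "'m \<Rightarrow> 'm \<Rightarrow> 'm"   (* comp C g f = g \<circ> f *)
  idm :: "'o \<Rightarrow> 'm"

definition is_category :: "('o, 'm) category \<Rightarrow> bool" where
  "is_category C \<longleftrightarrow>
     (\<forall>f\<in>Arr C. dom C f \<in> Obj C \<and> cod C f \<in> Obj C) \<and>
     (\<forall>a\<in>Obj C. idm C a \<in> Arr C \<and> dom C (idm C a) = a \<and> cod C (idm C a) = a) \<and>
     (\<forall>f\<in>Arr C. \<forall>g\<in>Arr C. cod C f = dom C g \<longrightarrow>
         comp C g f \<in> Arr C \<and> dom C (comp C g f) = dom C f \<and> cod C (comp C g f) = cod C g) \<and>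
     (\<forall>f\<in>Arr C. comp C f (idm C (dom C f)) = f \<and> comp C (idm C (cod C f)) f = f) \<and>
     (\<forall>f\<in>Arr C. \<forall>g\<in>Arr C. \<forall>h\<in>Arr C. cod C f = dom C g \<longrightarrow> cod C g = dom C h \<longrightarrow>
         comp C h (comp C g f) = comp C (comp C h g) f)"

definition is_hom :: "('o, 'm) category \<Rightarrow> 'm \<Rightarrow> 'o \<Rightarrow> 'o \<Rightarrow> bool" where
  "is_hom C f a b \<longleftrightarrow> f \<in> Arr C \<and> dom C f = a \<and> cod C f = b"

section \<open>The category \<Delta>+ (morphisms [n] \<rightarrow> [m], [n] = {0..<n}), extensional\<close>

definition is_dmap :: "nat \<Rightarrow> nat \<Rightarrow> (nat \<Rightarrow> nat) \<Rightarrow> bool" where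
  "is_dmap n m \<phi> \<longleftrightarrow> (\<forall>j<n. \<phi> j < m) \<and> (\<forall>j k. j \<le> k \<longrightarrow> k < n \<longrightarrow> \<phi> j \<le> \<phi> k)
                     \<and> (\<forall>j\<ge>n. \<phi> j = undefined)"

text \<open>hat: for \<phi> : [n] \<rightarrow> [m], hat n \<phi> : [m+1] \<rightarrow> [n+1]\<close>
definition hat :: "nat \<Rightarrow> (nat \<Rightarrow> nat) \<Rightarrow> nat \<Rightarrow> nat" where
  "hat n \<phi> i = Min ({j. j < n \<and> \<phi> j \<ge> i} \<union> {n})"

definition face :: "nat \<Rightarrow> nat \<Rightarrow> nat \<Rightarrow> nat" where
  "face n i j = (if j < n then (if j < i then j else Suc j) else undefined)"

record ('o, 'm) zigzag =
  zlen :: nat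
  zr :: "nat \<Rightarrow> 'o"    (* regular objects X(r_i), 0 \<le> i \<le> n *)
  zs :: "nat \<Rightarrow> 'o"    (* singular objects X(s_j), 0 \<le> j < n *)
  zf :: "nat \<Rightarrow> 'm"    (* x_j  : X(r_j) \<rightarrow> X(s_j) *)
  zb :: "nat \<Rightarrow> 'm"    (* x'_j : X(r_{j+1}) \<rightarrow> X(s_j) *)

definition is_zigzag :: "('o, 'm) category \<Rightarrow> ('o, 'm) zigzag \<Rightarrow> bool" where
  "is_zigzag C X \<longleftrightarrow>
     (\<forall>i\<le>zlen X. zr X i \<in> Obj C) \<and>
     (\<forall>j<zlen X. zs X j \<in> Obj C \<and> is_hom C (zf X j) (zr X j) (zs X j)
                 \<and> is_hom C (zb X j) (zr X (Suc j)) (zs X j))"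

record 'm zmap =
  smap :: "nat \<Rightarrow> nat"
  rsl :: "nat \<Rightarrow> 'm"   (* f(r_i) : X(r_{hat f_s i}) \<rightarrow> Y(r_i) *)
  ssl :: "nat \<Rightarrow> 'm"   (* f(s_j) : X(s_j) \<rightarrow> Y(s_{f_s j}) *)

text \<open>Zigzag maps; entries outside the meaningful index ranges are fixed to undefined
  so that maps are determined by their meaningful data.\<close>
definition is_zmap :: "('o, 'm) category \<Rightarrow> ('o, 'm) zigzag \<Rightarrow> ('o, 'm) zigzag \<Rightarrow> 'm zmap \<Rightarrow> bool" where
  "is_zmap C X Y f \<longleftrightarrow>
     (let n = zlen X; m = zlen Y; fs = smap f in
      is_dmap n m fs \<and>
      (\<forall>i\<le>m. is_hom C (rsl f i) (zr X (hat n fs i)) (zr Y i)) \<and>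
      (\<forall>j<n. is_hom C (ssl f j) (zs X j) (zs Y (fs j))) \<and>
      (\<forall>i>m. rsl f i = undefined) \<and> (\<forall>j\<ge>n. ssl f j = undefined) \<and>
      (\<forall>i<m. let P = {j. j < n \<and> fs j = i} in
         (if P \<noteq> {} then
            comp C (ssl f (Min P)) (zf X (Min P)) = comp C (zf Y i) (rsl f i) \<and>
            comp C (ssl f (Max P)) (zb X (Max P)) = comp C (zb Y i) (rsl f (Suc i)) \<and>
            (\<forall>j. Min P \<le> j \<longrightarrow> j < Max P \<longrightarrow>
                 comp C (ssl f j) (zb X j) = comp C (ssl f (Suc j)) (zf X (Suc j)))
          else comp C (zf Y i) (rsl f i) = comp C (zb Y i) (rsl f (Suc i)))))"

text \<open>Composition g \<circ> f for f : X \<rightarrow> Y, g : Y \<rightarrow> Z.\<close>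
definition zcomp :: "('o, 'm) category \<Rightarrow> ('o, 'm) zigzag \<Rightarrow> ('o, 'm) zigzag \<Rightarrow> ('o, 'm) zigzag
                      \<Rightarrow> 'm zmap \<Rightarrow> 'm zmap \<Rightarrow> 'm zmap" where
  "zcomp C X Y Z g f =
     \<lparr> smap = (\<lambda>j. if j < zlen X then smap g (smap f j) else undefined),
       rsl = (\<lambda>i. if i \<le> zlen Z then comp C (rsl g i) (rsl f (hat (zlen Y) (smap g) i)) else undefined),
       ssl = (\<lambda>j. if j < zlen X then comp C (ssl g (smap f j)) (ssl f j) else undefined) \<rparr>"

text \<open>\<pi>-cocartesian maps for \<pi> : Z(C) \<rightarrow> \<Delta>+\<close>
definition pi_cocartesian :: "('o, 'm) category \<Rightarrow> ('o, 'm) zigzag \<Rightarrow> ('o, 'm) zigzag \<Rightarrow> 'm zmap \<Rightarrow> bool" where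
  "pi_cocartesian C X Y f \<longleftrightarrow>
     (\<forall>Y' h u. is_zigzag C Y' \<longrightarrow> is_zmap C X Y' h \<longrightarrow> is_dmap (zlen Y) (zlen Y') u \<longrightarrow>
        (\<forall>j<zlen X. u (smap f j) = smap h j) \<longrightarrow>
        (\<exists>!v. is_zmap C Y Y' v \<and> smap v = u \<and> zcomp C X Y Y' v f = h))"

definition insert_id :: "('o, 'm) category \<Rightarrow> ('o, 'm) zigzag \<Rightarrow> nat \<Rightarrow> ('o, 'm) zigzag" where
  "insert_id C A i =
     \<lparr> zlen = Suc (zlen A),
       zr = (\<lambda>j. if j \<le> i then zr A j else zr A (j - 1)),
       zs = (\<lambda>j. if j < i then zs A j else if j = i then zr A i else zs A (j - 1)),
       zf = (\<lambda>j. if j < i then zf A j else if j = i then idm C (zr A i) else zf A (j - 1)),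
       zb = (\<lambda>j. if j < i then zb A j else if j = i then idm C (zr A i) else zb A (j - 1)) \<rparr>"

definition insert_map :: "('o, 'm) category \<Rightarrow> ('o, 'm) zigzag \<Rightarrow> nat \<Rightarrow> 'm zmap" where
  "insert_map C A i =
     \<lparr> smap = face (zlen A) i,
       rsl = (\<lambda>j. if j \<le> Suc (zlen A) then idm C (zr (insert_id C A i) j) else undefined),
       ssl = (\<lambda>j. if j < zlen A then idm C (zs A j) else undefined) \<rparr>"

end

theory Submission
  imports Defs
begin

text \<open>Write \<open>A'\<close> for \<open>A\<close> with the identity cospan inserted at \<open>i\<close> and \<open>f : A \<rightarrow> A'\<close> for the
  inserted map. Let \<open>h : A \<rightarrow> Y\<close> and \<open>u : [n+1] \<rightarrow> [m]\<close> with \<open>u \<circ> d\<^sub>i = h\<^sub>s\<close>. Since all slices of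
  \<open>f\<close> are identities, any \<open>v : A' \<rightarrow> Y\<close> with \<open>v\<^sub>s = u\<close> and \<open>v \<circ> f = h\<close> has the regular slices of
  \<open>h\<close>, and at every singular level other than the new one \<open>s\<^sub>i\<close> the slice of \<open>h\<close> at its
  \<open>d\<^sub>i\<close>-preimage. The slice \<open>v(s\<^sub>i)\<close> is then forced by the commutativity conditions of \<open>v\<close>,
  because both legs of the inserted cospan are identities. Conversely, with these slices every
  condition on \<open>v\<close> reduces to one on \<open>h\<close>: the fibres of \<open>u \<circ> d\<^sub>i\<close> are those of \<open>u\<close> with \<open>i\<close>
  removed, and \<open>hat (u \<circ> d\<^sub>i)\<close> is \<open>hat u\<close> followed by the map collapsing \<open>i\<close> and \<open>i+1\<close>, just
  as the regular objects of \<open>A'\<close> repeat \<open>A(r\<^sub>i)\<close>.\<close>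

lemma comp_idm_right: "is_category C \<Longrightarrow> is_hom C f a b \<Longrightarrow> comp C f (idm C a) = f"
  unfolding is_category_def is_hom_def by auto

lemma comp_idm_left: "is_category C \<Longrightarrow> is_hom C f a b \<Longrightarrow> comp C (idm C b) f = f"
  unfolding is_category_def is_hom_def by auto

lemma idm_is_hom: "is_category C \<Longrightarrow> a \<in> Obj C \<Longrightarrow> is_hom C (idm C a) a a"
  unfolding is_category_def is_hom_def by auto

lemma comp_is_hom:
  "is_category C \<Longrightarrow> is_hom C g b c \<Longrightarrow> is_hom C f a b \<Longrightarrow> is_hom C (comp C g f) a c"
  unfolding is_category_def is_hom_def by auto

lemma is_dmap_mono: "is_dmap n m \<phi> \<Longrightarrow> j \<le> k \<Longrightarrow> k < n \<Longrightarrow> \<phi> j \<le> \<phi> k"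
  by (simp add: is_dmap_def)

lemma face_less: "j < n \<Longrightarrow> face n i j = (if j < i then j else Suc j)"
  by (simp add: face_def)

lemma is_dmap_face: "is_dmap n (Suc n) (face n i)"
  by (auto simp: is_dmap_def face_def)

lemma face_cases:
  assumes "i \<le> n" "j < Suc n"
  obtains "j = i" | k where "k < n" "j = face n i k"
proof (cases "j < i")
  case True
  then show ?thesis using assms that(2)[of j] by (simp add: face_less)
next
  case False
  then show ?thesis
    using assms that(1) that(2)[of "j - 1"] by (cases "j = i") (auto simp: face_less)
qed

lemma hat_le: "hat n \<phi> k \<le> n"
  unfolding hat_def by (rule Min_le) auto

lemma hat_least: "j < n \<Longrightarrow> k \<le> \<phi> j \<Longrightarrow> hat n \<phi> k \<le> j"
  unfolding hat_def by (rule Min_le) auto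

lemma hat_bound:
  assumes "hat n \<phi> k < n"
  shows "k \<le> \<phi> (hat n \<phi> k)"
proof -
  have "hat n \<phi> k \<in> {j. j < n \<and> k \<le> \<phi> j} \<union> {n}"
    unfolding hat_def by (rule Min_in) auto
  then show ?thesis using assms by auto
qed

lemma less_hat: "j < hat n \<phi> k \<Longrightarrow> \<phi> j < k"
  using hat_least[of j n k \<phi>] hat_le[of n \<phi> k] by fastforce

lemma hat_eqI:
  assumes "H \<le> n" "H < n \<Longrightarrow> k \<le> \<phi> H" "\<And>j. j < H \<Longrightarrow> \<phi> j < k"
  shows "hat n \<phi> k = H"
proof (rule antisym)
  show "hat n \<phi> k \<le> H"
    using assms(1,2) hat_le hat_least by (cases "H < n") (auto simp: le_antisym)
  show "H \<le> hat n \<phi> k"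
  proof (rule ccontr)
    assume "\<not> H \<le> hat n \<phi> k"
    then have "hat n \<phi> k < n" "\<phi> (hat n \<phi> k) < k" using assms(1,3) by auto
    then show False using hat_bound[of n \<phi> k] by simp
  qed
qed

lemma hat_cong: "(\<And>j. j < n \<Longrightarrow> \<phi> j = \<psi> j) \<Longrightarrow> hat n \<phi> k = hat n \<psi> k"
  unfolding hat_def by (metis (mono_tags, lifting))

lemma hat_face: "i \<le> n \<Longrightarrow> k \<le> Suc n \<Longrightarrow> hat n (face n i) k = (if k \<le> i then k else k - 1)"
  by (rule hat_eqI) (auto simp: face_def split: if_splits)

lemma hat_comp_face:
  fixes u :: "nat \<Rightarrow> nat" and k :: nat
  assumes "i \<le> n" and mono: "\<And>j k. j \<le> k \<Longrightarrow> k < Suc n \<Longrightarrow> u j \<le> u k"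
  defines "H \<equiv> hat (Suc n) u k"
  shows "hat n (u \<circ> face n i) k = (if H \<le> i then H else H - 1)"
proof (rule hat_eqI)
  have H_le: "H \<le> Suc n" unfolding H_def by (rule hat_le)
  have H_bound: "H < Suc n \<Longrightarrow> k \<le> u H" unfolding H_def by (rule hat_bound)
  have less_H: "j < H \<Longrightarrow> u j < k" for j unfolding H_def by (rule less_hat)
  show "(if H \<le> i then H else H - 1) \<le> n"
    using H_le \<open>i \<le> n\<close> by auto
  show "k \<le> (u \<circ> face n i) (if H \<le> i then H else H - 1)"
    if less: "(if H \<le> i then H else H - 1) < n"
  proof (cases "H = i")
    case True
    have "k \<le> u H" using H_bound True less by simp
    also have "u H \<le> u (Suc i)" using mono[of H "Suc i"] True less by simp
    finally show ?thesis using True less by (simp add: face_less)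
  next
    case False
    then have "face n i (if H \<le> i then H else H - 1) = H"
      using less by (cases "H < i") (auto simp: face_less)
    moreover have "H < Suc n" using less by (cases "H \<le> i") auto
    ultimately show ?thesis using H_bound by simp
  qed
  show "(u \<circ> face n i) j < k" if "j < (if H \<le> i then H else H - 1)" for j
  proof -
    have "face n i j < H" using that H_le \<open>i \<le> n\<close> by (cases "H \<le> i") (auto simp: face_def)
    then show ?thesis using less_H by simp
  qed
qed

lemma dmap_fiber_interval:
  assumes "is_dmap n m \<phi>" and "P = {j. j < n \<and> \<phi> j = l}" and "P \<noteq> {}"
  shows "j \<in> P \<longleftrightarrow> Min P \<le> j \<and> j \<le> Max P"
proof -
  have "finite P" using assms(2) by simp
  then have "Min P \<in> P" "Max P \<in> P" using assms(3) by simp_all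
  then show ?thesis
    using \<open>finite P\<close> assms(2) is_dmap_mono[OF assms(1), of "Min P" j]
      is_dmap_mono[OF assms(1), of j "Max P"]
    by auto
qed

text \<open>Pointwise form of the conditions of \<^const>\<open>is_zmap\<close> over the fibre of \<open>l\<close>: the least and
  greatest elements of the fibre are recognized by their neighbours, which is equivalent because
  fibres of monotone maps are intervals.\<close>

definition zmap_commutes_at ::
  "('o, 'm) category \<Rightarrow> ('o, 'm) zigzag \<Rightarrow> ('o, 'm) zigzag \<Rightarrow> 'm zmap \<Rightarrow> nat \<Rightarrow> bool" where
  "zmap_commutes_at C X Y f l \<longleftrightarrow>
     (\<forall>j<zlen X. smap f j = l \<longrightarrow> (0 < j \<longrightarrow> smap f (j - 1) \<noteq> l) \<longrightarrow>
        comp C (ssl f j) (zf X j) = comp C (zf Y l) (rsl f l)) \<and>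
     (\<forall>j<zlen X. smap f j = l \<longrightarrow> (Suc j < zlen X \<longrightarrow> smap f (Suc j) \<noteq> l) \<longrightarrow>
        comp C (ssl f j) (zb X j) = comp C (zb Y l) (rsl f (Suc l))) \<and>
     (\<forall>j. Suc j < zlen X \<longrightarrow> smap f j = l \<longrightarrow> smap f (Suc j) = l \<longrightarrow>
        comp C (ssl f j) (zb X j) = comp C (ssl f (Suc j)) (zf X (Suc j))) \<and>
     ((\<forall>j<zlen X. smap f j \<noteq> l) \<longrightarrow> comp C (zf Y l) (rsl f l) = comp C (zb Y l) (rsl f (Suc l)))"

lemma zmap_commutes_at_iff:
  fixes l :: nat
  assumes dmap: "is_dmap (zlen X) (zlen Y) (smap f)"
  defines "P \<equiv> {j. j < zlen X \<and> smap f j = l}"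
  shows "(if P \<noteq> {} then
            comp C (ssl f (Min P)) (zf X (Min P)) = comp C (zf Y l) (rsl f l) \<and>
            comp C (ssl f (Max P)) (zb X (Max P)) = comp C (zb Y l) (rsl f (Suc l)) \<and>
            (\<forall>j. Min P \<le> j \<longrightarrow> j < Max P \<longrightarrow>
                 comp C (ssl f j) (zb X j) = comp C (ssl f (Suc j)) (zf X (Suc j)))
          else comp C (zf Y l) (rsl f l) = comp C (zb Y l) (rsl f (Suc l)))
         \<longleftrightarrow> zmap_commutes_at C X Y f l"
proof (cases "P = {}")
  case True
  then have "\<forall>j<zlen X. smap f j \<noteq> l" by (simp add: P_def)
  then show ?thesis unfolding zmap_commutes_at_def using True by simp
next
  case False
  define a b where "a = Min P" and "b = Max P"
  have mem: "j \<in> P \<longleftrightarrow> j < zlen X \<and> smap f j = l" for j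
    by (simp add: P_def)
  have fiber: "j < zlen X \<and> smap f j = l \<longleftrightarrow> a \<le> j \<and> j \<le> b" for j
    using dmap_fiber_interval[OF dmap P_def[THEN meta_eq_to_obj_eq] False, of j]
    by (simp only: mem a_def b_def)
  have "finite P" by (simp add: P_def)
  then have "a \<in> P" "b \<in> P" using False unfolding a_def b_def by (rule Min_in, rule Max_in)
  then have ab: "a \<le> b" "a < zlen X" "smap f a = l"
    using fiber mem by blast+
  have first: "j < zlen X \<and> smap f j = l \<and> (0 < j \<longrightarrow> smap f (j - 1) \<noteq> l) \<longleftrightarrow> j = a" for j
    using fiber[of j] fiber[of "j - 1"] ab by (cases "j = a") auto
  have last: "j < zlen X \<and> smap f j = l \<and> (Suc j < zlen X \<longrightarrow> smap f (Suc j) \<noteq> l) \<longleftrightarrow> j = b" for j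
    using fiber[of j] fiber[of "Suc j"] ab by (cases "j = b") auto
  have inner: "Suc j < zlen X \<and> smap f j = l \<and> smap f (Suc j) = l \<longleftrightarrow> a \<le> j \<and> j < b" for j
    using fiber[of j] fiber[of "Suc j"] by auto
  have nonempty: "(\<forall>j<zlen X. smap f j \<noteq> l) \<longleftrightarrow> False" using ab by auto
  have first_only: "(\<forall>j<zlen X. smap f j = l \<longrightarrow> (0 < j \<longrightarrow> smap f (j - 1) \<noteq> l) \<longrightarrow> Q j) \<longleftrightarrow> Q a"
    for Q using first by metis
  have last_only: "(\<forall>j<zlen X. smap f j = l \<longrightarrow> (Suc j < zlen X \<longrightarrow> smap f (Suc j) \<noteq> l) \<longrightarrow> Q j)
      \<longleftrightarrow> Q b" for Q using last by metis
  have inner_only: "(\<forall>j. Suc j < zlen X \<longrightarrow> smap f j = l \<longrightarrow> smap f (Suc j) = l \<longrightarrow> Q j)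
      \<longleftrightarrow> (\<forall>j. a \<le> j \<longrightarrow> j < b \<longrightarrow> Q j)" for Q using inner by metis
  show ?thesis
    unfolding zmap_commutes_at_def if_P[OF False] a_def[symmetric] b_def[symmetric]
    by (simp only: nonempty first_only last_only inner_only) simp
qed

lemma is_zmap_iff:
  "is_zmap C X Y f \<longleftrightarrow>
     is_dmap (zlen X) (zlen Y) (smap f) \<and>
     (\<forall>k\<le>zlen Y. is_hom C (rsl f k) (zr X (hat (zlen X) (smap f) k)) (zr Y k)) \<and>
     (\<forall>j<zlen X. is_hom C (ssl f j) (zs X j) (zs Y (smap f j))) \<and>
     (\<forall>k>zlen Y. rsl f k = undefined) \<and> (\<forall>j\<ge>zlen X. ssl f j = undefined) \<and>
     (\<forall>l<zlen Y. zmap_commutes_at C X Y f l)"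
proof (cases "is_dmap (zlen X) (zlen Y) (smap f)")
  case True
  then show ?thesis unfolding is_zmap_def Let_def by (simp only: zmap_commutes_at_iff)
next
  case False
  then show ?thesis unfolding is_zmap_def by simp
qed

lemma is_zmapD:
  assumes "is_zmap C X Y f"
  shows "is_dmap (zlen X) (zlen Y) (smap f)"
    and "k \<le> zlen Y \<Longrightarrow> is_hom C (rsl f k) (zr X (hat (zlen X) (smap f) k)) (zr Y k)"
    and "j < zlen X \<Longrightarrow> is_hom C (ssl f j) (zs X j) (zs Y (smap f j))"
    and "zlen Y < k \<Longrightarrow> rsl f k = undefined"
    and "zlen X \<le> j \<Longrightarrow> ssl f j = undefined"
    and "l < zlen Y \<Longrightarrow> zmap_commutes_at C X Y f l"
  using assms by (simp_all add: is_zmap_iff)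

lemma is_zmapI:
  assumes "is_dmap (zlen X) (zlen Y) (smap f)"
    and "\<And>k. k \<le> zlen Y \<Longrightarrow> is_hom C (rsl f k) (zr X (hat (zlen X) (smap f) k)) (zr Y k)"
    and "\<And>j. j < zlen X \<Longrightarrow> is_hom C (ssl f j) (zs X j) (zs Y (smap f j))"
    and "\<And>k. zlen Y < k \<Longrightarrow> rsl f k = undefined"
    and "\<And>j. zlen X \<le> j \<Longrightarrow> ssl f j = undefined"
    and "\<And>l. l < zlen Y \<Longrightarrow> zmap_commutes_at C X Y f l"
  shows "is_zmap C X Y f"
  using assms by (simp add: is_zmap_iff)

lemma zmap_commutes_atD:
  assumes "zmap_commutes_at C X Y f l"
  shows "\<lbrakk>j < zlen X; smap f j = l; 0 < j \<Longrightarrow> smap f (j - 1) \<noteq> l\<rbrakk> \<Longrightarrow>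
           comp C (ssl f j) (zf X j) = comp C (zf Y l) (rsl f l)"
    and "\<lbrakk>j < zlen X; smap f j = l; Suc j < zlen X \<Longrightarrow> smap f (Suc j) \<noteq> l\<rbrakk> \<Longrightarrow>
           comp C (ssl f j) (zb X j) = comp C (zb Y l) (rsl f (Suc l))"
    and "\<lbrakk>Suc j < zlen X; smap f j = l; smap f (Suc j) = l\<rbrakk> \<Longrightarrow>
           comp C (ssl f j) (zb X j) = comp C (ssl f (Suc j)) (zf X (Suc j))"
    and "(\<And>j. j < zlen X \<Longrightarrow> smap f j \<noteq> l) \<Longrightarrow>
           comp C (zf Y l) (rsl f l) = comp C (zb Y l) (rsl f (Suc l))"
  using assms unfolding zmap_commutes_at_def by blast+

lemma zlen_insert_id [simp]: "zlen (insert_id C A i) = Suc (zlen A)"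
  by (simp add: insert_id_def)

lemma insert_id_simps:
  "zr (insert_id C A i) j = (if j \<le> i then zr A j else zr A (j - 1))"
  "zs (insert_id C A i) j = (if j < i then zs A j else if j = i then zr A i else zs A (j - 1))"
  "zf (insert_id C A i) j =
     (if j < i then zf A j else if j = i then idm C (zr A i) else zf A (j - 1))"
  "zb (insert_id C A i) j =
     (if j < i then zb A j else if j = i then idm C (zr A i) else zb A (j - 1))"
  by (simp_all add: insert_id_def)

lemma insert_id_face:
  assumes "k < zlen A"
  shows "zs (insert_id C A i) (face (zlen A) i k) = zs A k"
    and "zf (insert_id C A i) (face (zlen A) i k) = zf A k"
    and "zb (insert_id C A i) (face (zlen A) i k) = zb A k"
  using assms by (simp_all add: insert_id_simps face_less)

lemma insert_map_simps:
  "smap (insert_map C A i) = face (zlen A) i"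
  "rsl (insert_map C A i) k =
     (if k \<le> Suc (zlen A) then idm C (zr (insert_id C A i) k) else undefined)"
  "ssl (insert_map C A i) j = (if j < zlen A then idm C (zs A j) else undefined)"
  by (simp_all add: insert_map_def)

locale identity_insertion =
  fixes C :: "('o, 'm) category" and A :: "('o, 'm) zigzag" and i :: nat
  assumes category: "is_category C" and zigzag: "is_zigzag C A" and position: "i \<le> zlen A"
begin

abbreviation "n \<equiv> zlen A"
abbreviation "A' \<equiv> insert_id C A i"
abbreviation "f \<equiv> insert_map C A i"

lemma zr_obj: "k \<le> n \<Longrightarrow> zr A k \<in> Obj C"
  and zs_obj: "j < n \<Longrightarrow> zs A j \<in> Obj C"
  and zf_hom: "j < n \<Longrightarrow> is_hom C (zf A j) (zr A j) (zs A j)"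
  and zb_hom: "j < n \<Longrightarrow> is_hom C (zb A j) (zr A (Suc j)) (zs A j)"
  using zigzag by (simp_all add: is_zigzag_def)

lemma insert_map_is_zmap: "is_zmap C A A' f"
proof (rule is_zmapI)
  show "is_dmap (zlen A) (zlen A') (smap f)"
    by (simp add: insert_id_simps insert_map_simps is_dmap_face)
  show "is_hom C (rsl f k) (zr A (hat (zlen A) (smap f) k)) (zr A' k)" if "k \<le> zlen A'" for k
    using that position zr_obj hat_face[OF position, of k]
    by (auto simp: insert_id_simps insert_map_simps face_less intro: idm_is_hom[OF category])
  show "is_hom C (ssl f j) (zs A j) (zs A' (smap f j))" if "j < zlen A" for j
    using that zs_obj
    by (auto simp: insert_id_simps insert_map_simps face_less intro: idm_is_hom[OF category])
  show "zlen A' < k \<Longrightarrow> rsl f k = undefined" for k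
    by (simp add: insert_id_simps insert_map_simps)
  show "zlen A \<le> j \<Longrightarrow> ssl f j = undefined" for j
    by (simp add: insert_map_simps)
  show "zmap_commutes_at C A A' f l" if "l < zlen A'" for l
    unfolding zmap_commutes_at_def
  proof (intro conjI allI impI)
    fix j assume j: "j < zlen A" "smap f j = l"
    show "comp C (ssl f j) (zf A j) = comp C (zf A' l) (rsl f l)"
      using j that comp_idm_left[OF category zf_hom] comp_idm_right[OF category zf_hom]
      by (auto simp: insert_id_simps insert_map_simps face_less split: if_splits)
    show "comp C (ssl f j) (zb A j) = comp C (zb A' l) (rsl f (Suc l))"
      using j that comp_idm_left[OF category zb_hom] comp_idm_right[OF category zb_hom]
      by (auto simp: insert_id_simps insert_map_simps face_less split: if_splits)
  next
    fix j assume "Suc j < zlen A" "smap f j = l" "smap f (Suc j) = l"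
    then show "comp C (ssl f j) (zb A j) = comp C (ssl f (Suc j)) (zf A (Suc j))"
      by (simp add: insert_map_simps face_less split: if_splits)
  next
    assume empty: "\<forall>j<zlen A. smap f j \<noteq> l"
    have "l = i"
    proof (rule ccontr)
      assume "l \<noteq> i"
      then have "face n i (if l < i then l else l - 1) = l" "(if l < i then l else l - 1) < n"
        using that position by (auto simp: insert_id_simps face_less)
      then show False using empty by (auto simp: insert_map_simps)
    qed
    then show "comp C (zf A' l) (rsl f l) = comp C (zb A' l) (rsl f (Suc l))"
      using position by (simp add: insert_id_simps insert_map_simps)
  qed
qed

end

locale insertion_factorization =
  identity_insertion C A i for C :: "('o, 'm) category" and A :: "('o, 'm) zigzag" and i +
  fixes Y :: "('o, 'm) zigzag" and h :: "'m zmap" and u :: "nat \<Rightarrow> nat"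
  assumes target: "is_zigzag C Y" and h: "is_zmap C A Y h"
    and u: "is_dmap (Suc n) (zlen Y) u"
    and u_face: "\<And>j. j < n \<Longrightarrow> u (face n i j) = smap h j"
begin

lemma u_mono: "j \<le> k \<Longrightarrow> k < Suc n \<Longrightarrow> u j \<le> u k"
  using u by (rule is_dmap_mono)

lemma u_less: "j < Suc n \<Longrightarrow> u j < zlen Y"
  using u by (simp add: is_dmap_def)

lemma zr_hat_smap_h: "zr A (hat n (smap h) k) = zr A' (hat (Suc n) u k)"
proof -
  have "hat n (smap h) k = hat n (u \<circ> face n i) k"
    by (rule hat_cong) (simp add: u_face)
  also have "\<dots> = (if hat (Suc n) u k \<le> i then hat (Suc n) u k else hat (Suc n) u k - 1)"
    using position u_mono by (rule hat_comp_face)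
  finally show ?thesis by (simp add: insert_id_simps)
qed

text \<open>If \<open>s\<^sub>i\<^sub>-\<^sub>1\<close> lies in the same fibre of \<open>u\<close> as \<open>s\<^sub>i\<close>, the square between them forces
  the slice at \<open>s\<^sub>i\<close>; otherwise \<open>s\<^sub>i\<close> begins its fibre and the square over \<open>y\<^bsub>u i\<^esub>\<close> forces it.\<close>

definition mid_slice :: 'm where
  "mid_slice = (if 0 < i \<and> u (i - 1) = u i then comp C (ssl h (i - 1)) (zb A (i - 1))
                else comp C (zf Y (u i)) (rsl h (u i)))"

definition factor :: "'m zmap" where
  "factor = \<lparr>smap = u, rsl = rsl h,
     ssl = (\<lambda>j. if j < i then ssl h j else if j = i then mid_slice
               else if j < Suc n then ssl h (j - 1) else undefined)\<rparr>"

lemma mid_slice_same_fibre: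
  "0 < i \<Longrightarrow> u (i - 1) = u i \<Longrightarrow> mid_slice = comp C (ssl h (i - 1)) (zb A (i - 1))"
  by (simp add: mid_slice_def)

lemma mid_slice_fibre_start:
  "(0 < i \<Longrightarrow> u (i - 1) \<noteq> u i) \<Longrightarrow> mid_slice = comp C (zf Y (u i)) (rsl h (u i))"
  by (auto simp: mid_slice_def)

lemma mid_slice_hom: "is_hom C mid_slice (zr A i) (zs Y (u i))"
proof (cases "0 < i \<and> u (i - 1) = u i")
  case True
  then have "i - 1 < n" "Suc (i - 1) = i" using position by auto
  then have "is_hom C (ssl h (i - 1)) (zs A (i - 1)) (zs Y (u i))"
    "is_hom C (zb A (i - 1)) (zr A i) (zs A (i - 1))"
    using True is_zmapD(3)[OF h, of "i - 1"] u_face[of "i - 1"] zb_hom[of "i - 1"]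
    by (simp_all add: face_less)
  then show ?thesis
    unfolding mid_slice_def if_P[OF True] by (rule comp_is_hom[OF category])
next
  case False
  have "hat (Suc n) u (u i) = i"
  proof (rule hat_eqI)
    show "j < i \<Longrightarrow> u j < u i" for j
      using False u_mono[of j "i - 1"] u_mono[of "i - 1" i] position by force
  qed (use position in simp_all)
  then have "is_hom C (rsl h (u i)) (zr A i) (zr Y (u i))"
    using is_zmapD(2)[OF h, of "u i"] u_less[of i] position zr_hat_smap_h[of "u i"]
    by (simp add: insert_id_simps)
  with target u_less[of i] position have "is_hom C (zf Y (u i)) (zr Y (u i)) (zs Y (u i))"
    "is_hom C (rsl h (u i)) (zr A i) (zr Y (u i))" by (simp_all add: is_zigzag_def)
  then show ?thesis
    unfolding mid_slice_def if_not_P[OF False] by (rule comp_is_hom[OF category])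
qed

lemma smap_h_eq: "j < n \<Longrightarrow> smap h j = u (if j < i then j else Suc j)"
  using u_face[of j] by (simp add: face_less)

lemma h_commutes: "l < zlen Y \<Longrightarrow> zmap_commutes_at C A Y h l"
  using h by (rule is_zmapD(6))

lemma factor_simps:
  "smap factor = u"
  "rsl factor = rsl h"
  "ssl factor j = (if j < i then ssl h j else if j = i then mid_slice
                   else if j < Suc n then ssl h (j - 1) else undefined)"
  by (simp_all add: factor_def)

lemma factor_ssl_face: "k < n \<Longrightarrow> ssl factor (face n i k) = ssl h k"
  by (simp add: factor_simps face_less)

lemma mid_slice_comp_idm: "comp C mid_slice (idm C (zr A i)) = mid_slice"
  using category mid_slice_hom by (rule comp_idm_right)

lemma factor_first_square:
  assumes j: "j < Suc n" "u j = l" and first: "0 < j \<Longrightarrow> u (j - 1) \<noteq> l"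
  shows "comp C (ssl factor j) (zf A' j) = comp C (zf Y l) (rsl factor l)"
  using position j(1)
proof (cases rule: face_cases)
  case 1
  then have "mid_slice = comp C (zf Y l) (rsl h l)" using j first mid_slice_fibre_start by auto
  then show ?thesis using 1 mid_slice_comp_idm by (simp add: factor_simps insert_id_simps)
next
  case (2 k)
  have "smap h (k - 1) \<noteq> l" if "0 < k"
  proof -
    have "face n i (k - 1) < j" using 2 that by (auto simp: face_less)
    then have "smap h (k - 1) \<le> u (j - 1)" "u (j - 1) \<le> l"
      using u_mono[of "face n i (k - 1)" "j - 1"] u_mono[of "j - 1" j] u_face[of "k - 1"] 2 j that
      by auto
    moreover have "0 < j" using 2 that by (auto simp: face_less)
    ultimately show ?thesis using first by auto
  qed
  moreover have "l < zlen Y" using j u_less by auto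
  ultimately have "comp C (ssl h k) (zf A k) = comp C (zf Y l) (rsl h l)"
    using 2 j u_face[of k] by (intro zmap_commutes_atD(1)[OF h_commutes]) auto
  then show ?thesis using 2 by (simp add: factor_ssl_face insert_id_face factor_simps(2))
qed

lemma factor_last_square:
  assumes j: "j < Suc n" "u j = l" and last: "Suc j < Suc n \<Longrightarrow> u (Suc j) \<noteq> l"
  shows "comp C (ssl factor j) (zb A' j) = comp C (zb Y l) (rsl factor (Suc l))"
  using position j(1)
proof (cases rule: face_cases)
  case 1
  have l: "l < zlen Y" using j u_less by auto
  have "mid_slice = comp C (zb Y l) (rsl h (Suc l))"
  proof (cases "0 < i \<and> u (i - 1) = u i")
    case True
    then have "comp C (ssl h (i - 1)) (zb A (i - 1)) = comp C (zb Y l) (rsl h (Suc l))"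
      using 1 j last position smap_h_eq[of "i - 1"] smap_h_eq[of i]
      by (intro zmap_commutes_atD(2)[OF h_commutes[OF l]]) auto
    then show ?thesis using True mid_slice_same_fibre by simp
  next
    case False
    have "smap h k \<noteq> l" if "k < n" for k
    proof (cases "k < i")
      case True
      then have "u k \<le> u (i - 1)" "u (i - 1) \<le> u i" using u_mono position by auto
      then show ?thesis using True False 1 j that smap_h_eq by auto
    next
      case False
      then have "u i \<le> u (Suc i)" "u (Suc i) \<le> u (Suc k)" using u_mono that by auto
      then show ?thesis using False 1 j last that smap_h_eq by auto
    qed
    then have "comp C (zf Y l) (rsl h l) = comp C (zb Y l) (rsl h (Suc l))"
      by (rule zmap_commutes_atD(4)[OF h_commutes[OF l]])
    then show ?thesis using False 1 j mid_slice_fibre_start by auto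
  qed
  then show ?thesis using 1 mid_slice_comp_idm by (simp add: factor_simps insert_id_simps)
next
  case (2 k)
  have "smap h (Suc k) \<noteq> l" if "Suc k < n"
  proof -
    have "Suc j \<le> face n i (Suc k)" using 2 that by (auto simp: face_less)
    then have "u (Suc j) \<le> smap h (Suc k)" "l \<le> u (Suc j)"
      using u_mono[of "Suc j" "face n i (Suc k)"] u_mono[of j "Suc j"] u_face[of "Suc k"] 2 j that
      by (auto simp: face_less)
    moreover have "Suc j < Suc n" using 2 that by (auto simp: face_less)
    ultimately show ?thesis using last by auto
  qed
  moreover have "l < zlen Y" using j u_less by auto
  ultimately have "comp C (ssl h k) (zb A k) = comp C (zb Y l) (rsl h (Suc l))"
    using 2 j u_face[of k] by (intro zmap_commutes_atD(2)[OF h_commutes]) auto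
  then show ?thesis using 2 by (simp add: factor_ssl_face insert_id_face factor_simps(2))
qed

lemma factor_inner_square:
  assumes j: "Suc j < Suc n" "u j = l" "u (Suc j) = l"
  shows "comp C (ssl factor j) (zb A' j) = comp C (ssl factor (Suc j)) (zf A' (Suc j))"
proof -
  have l: "l < zlen Y" using j u_less by auto
  note inner = zmap_commutes_atD(3)[OF h_commutes[OF l]]
  consider "Suc j < i" | "Suc j = i" | "j = i" | "i < j" by linarith
  then show ?thesis
  proof cases
    case 1
    then have "comp C (ssl h j) (zb A j) = comp C (ssl h (Suc j)) (zf A (Suc j))"
      using j position smap_h_eq by (intro inner) auto
    then show ?thesis using 1 by (simp add: factor_simps insert_id_simps)
  next
    case 2
    then show ?thesis
      using j mid_slice_same_fibre mid_slice_comp_idm by (auto simp: factor_simps insert_id_simps)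
  next
    case 3
    have "mid_slice = comp C (ssl h i) (zf A i)"
    proof (cases "0 < i \<and> u (i - 1) = u i")
      case True
      then have "comp C (ssl h (i - 1)) (zb A (i - 1))
          = comp C (ssl h (Suc (i - 1))) (zf A (Suc (i - 1)))"
        using 3 j smap_h_eq by (intro inner) auto
      then show ?thesis using True mid_slice_same_fibre by simp
    next
      case False
      then have "comp C (ssl h i) (zf A i) = comp C (zf Y l) (rsl h l)"
        using 3 j smap_h_eq by (intro zmap_commutes_atD(1)[OF h_commutes[OF l]]) auto
      then show ?thesis using False 3 j mid_slice_fibre_start by auto
    qed
    then show ?thesis using 3 j mid_slice_comp_idm by (simp add: factor_simps insert_id_simps)
  next
    case 4
    then have "comp C (ssl h (j - 1)) (zb A (j - 1))
        = comp C (ssl h (Suc (j - 1))) (zf A (Suc (j - 1)))"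
      using j smap_h_eq by (intro inner) auto
    then show ?thesis using 4 j by (simp add: factor_simps insert_id_simps)
  qed
qed

lemma factor_empty_fibre:
  assumes "l < zlen Y" and empty: "\<And>j. j < Suc n \<Longrightarrow> u j \<noteq> l"
  shows "comp C (zf Y l) (rsl factor l) = comp C (zb Y l) (rsl factor (Suc l))"
proof -
  have "smap h k \<noteq> l" if "k < n" for k
    using that empty[of "face n i k"] u_face[of k] by (simp add: face_less)
  then show ?thesis
    unfolding factor_simps by (rule zmap_commutes_atD(4)[OF h_commutes[OF \<open>l < zlen Y\<close>]])
qed

lemma factor_is_zmap: "is_zmap C A' Y factor"
proof (rule is_zmapI)
  show "is_dmap (zlen A') (zlen Y) (smap factor)"
    using u by (simp add: factor_simps insert_id_simps)
  show "is_hom C (rsl factor k) (zr A' (hat (zlen A') (smap factor) k)) (zr Y k)"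
    if "k \<le> zlen Y" for k
    using is_zmapD(2)[OF h that] zr_hat_smap_h by (simp add: factor_simps insert_id_simps)
  show "is_hom C (ssl factor j) (zs A' j) (zs Y (smap factor j))" if "j < zlen A'" for j
    using position that[unfolded zlen_insert_id]
  proof (cases rule: face_cases)
    case 1
    then show ?thesis using mid_slice_hom by (simp add: factor_simps insert_id_simps)
  next
    case (2 k)
    then show ?thesis using is_zmapD(3)[OF h, of k] u_face[of k]
      by (simp add: factor_ssl_face insert_id_face factor_simps(1))
  qed
  show "zlen Y < k \<Longrightarrow> rsl factor k = undefined" for k
    using is_zmapD(4)[OF h] by (simp add: factor_simps)
  show "zlen A' \<le> j \<Longrightarrow> ssl factor j = undefined" for j
    using position by (simp add: factor_simps insert_id_simps)
  show "zmap_commutes_at C A' Y factor l" if "l < zlen Y" for l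
    unfolding zmap_commutes_at_def
    using factor_first_square factor_last_square factor_inner_square factor_empty_fibre[OF that]
    by (simp add: factor_simps(1) insert_id_simps)
qed

lemma factor_comp: "zcomp C A A' Y factor f = h"
proof (rule zmap.equality)
  show "smap (zcomp C A A' Y factor f) = smap h"
    using u_face is_zmapD(1)[OF h]
    by (auto simp: zcomp_def factor_simps insert_map_simps is_dmap_def)
  have "comp C (rsl h k) (idm C (zr A' (hat (Suc n) u k))) = rsl h k" if "k \<le> zlen Y" for k
    using comp_idm_right[OF category is_zmapD(2)[OF h that]] zr_hat_smap_h by simp
  then show "rsl (zcomp C A A' Y factor f) = rsl h"
    using is_zmapD(4)[OF h] hat_le
    by (auto simp: zcomp_def factor_simps insert_map_simps insert_id_simps)
  have "comp C (ssl h j) (idm C (zs A j)) = ssl h j" if "j < n" for j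
    using category is_zmapD(3)[OF h that] by (rule comp_idm_right)
  then show "ssl (zcomp C A A' Y factor f) = ssl h"
    using is_zmapD(5)[OF h] by (auto simp: zcomp_def factor_ssl_face insert_map_simps)
qed simp

lemma factorization_rsl:
  assumes w: "is_zmap C A' Y w" "smap w = u" "zcomp C A A' Y w f = h"
  shows "rsl w = rsl h"
proof
  fix k
  show "rsl w k = rsl h k"
  proof (cases "k \<le> zlen Y")
    case True
    have "rsl h k = comp C (rsl w k) (idm C (zr A' (hat (Suc n) u k)))"
      using True hat_le w(2,3)[symmetric] by (simp add: zcomp_def insert_map_simps)
    also have "\<dots> = rsl w k"
      using comp_idm_right[OF category is_zmapD(2)[OF w(1) True]] w(2) by simp
    finally show ?thesis by simp
  next
    case False
    then show ?thesis using is_zmapD(4)[OF w(1)] is_zmapD(4)[OF h] by simp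
  qed
qed

lemma factorization_ssl_face:
  assumes w: "is_zmap C A' Y w" "smap w = u" "zcomp C A A' Y w f = h" and "k < n"
  shows "ssl w (face n i k) = ssl h k"
proof -
  have "face n i k < zlen A'" using \<open>k < n\<close> by (simp add: face_less)
  have "ssl h k = comp C (ssl w (face n i k)) (idm C (zs A k))"
    using \<open>k < n\<close> w(2,3)[symmetric] by (simp add: zcomp_def insert_map_simps)
  also have "\<dots> = ssl w (face n i k)"
    using comp_idm_right[OF category is_zmapD(3)[OF w(1) \<open>face n i k < zlen A'\<close>]]
    by (simp add: insert_id_face[OF \<open>k < n\<close>])
  finally show ?thesis by simp
qed

lemma factorization_ssl_mid:
  assumes w: "is_zmap C A' Y w" "smap w = u" "zcomp C A A' Y w f = h"
  shows "ssl w i = mid_slice"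
proof -
  have l: "u i < zlen Y" using position u_less by simp
  have w_i: "ssl w i = comp C (ssl w i) (zf A' i)"
    using comp_idm_right[OF category is_zmapD(3)[OF w(1), of i]] position
    by (simp add: insert_id_simps)
  show ?thesis
  proof (cases "0 < i \<and> u (i - 1) = u i")
    case True
    then have "i - 1 < n" "face n i (i - 1) = i - 1" using position by (auto simp: face_less)
    then have "ssl w (i - 1) = ssl h (i - 1)"
      using factorization_ssl_face[OF w] by metis
    moreover have "comp C (ssl w (i - 1)) (zb A' (i - 1)) = comp C (ssl w i) (zf A' i)"
      using True position w(2) zmap_commutes_atD(3)[OF is_zmapD(6)[OF w(1) l], of "i - 1"]
      by (simp add: insert_id_simps)
    ultimately show ?thesis
      using True w_i mid_slice_same_fibre by (simp add: insert_id_simps)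
  next
    case False
    then have "comp C (ssl w i) (zf A' i) = comp C (zf Y (u i)) (rsl w (u i))"
      using position w(2) by (intro zmap_commutes_atD(1)[OF is_zmapD(6)[OF w(1) l]]) auto
    then show ?thesis
      using False w_i mid_slice_fibre_start factorization_rsl[OF w] by auto
  qed
qed

lemma factor_unique:
  assumes w: "is_zmap C A' Y w" "smap w = u" "zcomp C A A' Y w f = h"
  shows "w = factor"
proof (rule zmap.equality)
  have "ssl w j = ssl factor j" for j
  proof (cases "j < Suc n")
    case False
    then show ?thesis using is_zmapD(5)[OF w(1)] position by (simp add: factor_simps)
  next
    case True
    with position show ?thesis
      by (cases rule: face_cases)
        (simp_all add: factorization_ssl_mid[OF w] factorization_ssl_face[OF w] factor_ssl_face
          factor_simps(3)[of i])
  qed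
  then show "ssl w = ssl factor" by auto
qed (simp_all add: w(2) factorization_rsl[OF w] factor_simps)

end

lemma (in identity_insertion) insert_map_pi_cocartesian: "pi_cocartesian C A A' f"
  unfolding pi_cocartesian_def
proof (intro allI impI)
  fix Y h u
  assume "is_zigzag C Y" "is_zmap C A Y h" "is_dmap (zlen A') (zlen Y) u"
    "\<forall>j<zlen A. u (smap f j) = smap h j"
  then interpret insertion_factorization C A i Y h u
    by unfold_locales (simp_all add: insert_map_simps)
  show "\<exists>!v. is_zmap C A' Y v \<and> smap v = u \<and> zcomp C A A' Y v f = h"
  proof (rule ex1I[of _ factor])
    show "is_zmap C A' Y factor \<and> smap factor = u \<and> zcomp C A A' Y factor f = h"
      using factor_is_zmap factor_comp by (simp add: factor_simps)
  qed (use factor_unique in blast)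
qed

theorem lemma3p2:
  fixes C :: "('o, 'm) category" and A :: "('o, 'm) zigzag" and i :: nat
  assumes "is_category C"
    and "is_zigzag C A"
    and "i \<le> zlen A"
  shows "is_zmap C A (insert_id C A i) (insert_map C A i)
         \<and> pi_cocartesian C A (insert_id C A i) (insert_map C A i)"
proof -
  interpret identity_insertion C A i
    using assms by unfold_locales
  show ?thesis using insert_map_is_zmap insert_map_pi_cocartesian by simp
qed

end
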